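(* Let $g$ and $k$ be positive integers, let $G=(A,B;E)$ be a bipartite graph with girth at least $2g$, and let $H$ be a bipartite graph with vertex classes $A$ and $[k]$. Suppose that $H$ contains no cycle $u_1,\ell_1,\dots,u_h,\ell_h$ with $u_1,\dots,u_h\in A$, $\ell_1,\dots,\ell_h\in[k]$ for some $h<g$ such that $u_1,\dots,u_h$ have a common neighbor in $G$. Then $G\otimes_H k$ has girth at least $2g$.
   Context: For a bipartite graph $G=(A,B;E)$ and positive integer $k$, $G\otimes k$ is the bipartite graph with vertex classes $A\times[k]$ and $(B\times[k])\cup A'$, where $A'$ is a disjoint copy of $A$; $(u,i)\in A\times[k]$ and $(v,j)\in B\times[k]$ are adjacent iff $i=j$ and $\{u,v\}\in E$; $(u,i)\in A\times[k]$ and $v\in A'$ are adjacent iff $v$ is the copy of $u$; there are no other edges. For a bipartite graph $H$ with vertex classes $A$ and $[k]$, $G\otimes_H k$ is the induced subgraph of $G\otimes k$ obtained by keeping all vertices of $(B\times[k])\cup A'$ and only those vertices $(u,i)\in A\times[k]$ with $\{u,i\}\in E(H)$. The girth of a graph is the length of its shortest cycle. *)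

theory Defs
  imports Main
begin

text \<open>A bipartite graph G = (A,B;E) with vertex classes A :: 'a set and B :: 'b set and
  edge set E \<subseteq> A \<times> B is viewed as a simple graph on the disjoint union 'a + 'b.\<close>

definition bip_adj :: "('a \<times> 'b) set \<Rightarrow> ('a + 'b) \<Rightarrow> ('a + 'b) \<Rightarrow> bool" where
  "bip_adj E x y \<longleftrightarrow>
     (\<exists>u v. (u, v) \<in> E \<and> ((x = Inl u \<and> y = Inr v) \<or> (x = Inr v \<and> y = Inl u)))"

definition bip_verts :: "'a set \<Rightarrow> 'b set \<Rightarrow> ('a + 'b) set" where
  "bip_verts A B = Inl ` A \<union> Inr ` B"

definition is_cycle :: "'v set \<Rightarrow> ('v \<Rightarrow> 'v \<Rightarrow> bool) \<Rightarrow> 'v list \<Rightarrow> bool" where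
  "is_cycle V adj cs \<longleftrightarrow>
     3 \<le> length cs \<and> distinct cs \<and> set cs \<subseteq> V \<and>
     (\<forall>i < length cs. adj (cs ! i) (cs ! ((i + 1) mod length cs)))"

definition girth_at_least :: "'v set \<Rightarrow> ('v \<Rightarrow> 'v \<Rightarrow> bool) \<Rightarrow> nat \<Rightarrow> bool" where
  "girth_at_least V adj m \<longleftrightarrow> (\<forall>cs. is_cycle V adj cs \<longrightarrow> m \<le> length cs)"

text \<open>The construction G \<otimes> k. First class: A \<times> [k]. Second class: (B \<times> [k]) \<union> A',
  with B \<times> [k] encoded as Inl and the copy A' of A encoded as Inr.\<close>

definition tensor_A :: "'a set \<Rightarrow> nat \<Rightarrow> ('a \<times> nat) set" where
  "tensor_A A k = A \<times> {1..k}"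

definition tensor_B :: "'a set \<Rightarrow> 'b set \<Rightarrow> nat \<Rightarrow> (('b \<times> nat) + 'a) set" where
  "tensor_B A B k = Inl ` (B \<times> {1..k}) \<union> Inr ` A"

definition tensor_E :: "'a set \<Rightarrow> 'b set \<Rightarrow> ('a \<times> 'b) set \<Rightarrow> nat
    \<Rightarrow> (('a \<times> nat) \<times> (('b \<times> nat) + 'a)) set" where
  "tensor_E A B E k =
     {((u, i), Inl (v, j)) | u i v j. u \<in> A \<and> v \<in> B \<and> i \<in> {1..k} \<and> j \<in> {1..k}
                                      \<and> i = j \<and> (u, v) \<in> E}
   \<union> {((u, i), Inr w) | u i w. u \<in> A \<and> i \<in> {1..k} \<and> w = u}"

text \<open>G \<otimes>_H k for H with vertex classes A and [k] (edge set EH \<subseteq> A \<times> [k]): induced subgraph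
  keeping the whole second class and those (u,i) with {u,i} \<in> E(H).\<close>

definition tensorH_A :: "'a set \<Rightarrow> nat \<Rightarrow> ('a \<times> nat) set \<Rightarrow> ('a \<times> nat) set" where
  "tensorH_A A k EH = {x \<in> tensor_A A k. x \<in> EH}"

definition tensorH_E :: "'a set \<Rightarrow> 'b set \<Rightarrow> ('a \<times> 'b) set \<Rightarrow> nat \<Rightarrow> ('a \<times> nat) set
    \<Rightarrow> (('a \<times> nat) \<times> (('b \<times> nat) + 'a)) set" where
  "tensorH_E A B E k EH = {e \<in> tensor_E A B E k. fst e \<in> tensorH_A A k EH}"

end

theory Submission
  imports Defs
begin

(* Project a cycle C of G \<otimes>\<^sub>H k of length < 2g to G by (u,i), u' \<mapsto> u and (v,j) \<mapsto> v;
  adjacent vertices go to adjacent or equal vertices. Each (u,i) has only one neighbour in A',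
  so C passes through some (v,l) \<in> B \<times> [k]. Between two consecutive visits of C to copies
  (v,l), (v,l') of v, the projection is a walk in G - v of length < 2g - 1 joining two
  neighbours of v; as G has girth \<ge> 2g, they coincide, say u, so {u,l} and {u,l'} are edges of H.
  The labels of the visits together with these vertices u form a closed walk in H of length
  < 2g through common G-neighbours of v, and this walk contains a cycle forbidden by the
  hypothesis on H. *)

section \<open>Walks and cycles\<close>

lemma successively_map_upt:
  assumes "\<And>j. m \<le> j \<Longrightarrow> Suc j < n \<Longrightarrow> P (f j) (f (Suc j))"
  shows "successively P (map f [m..<n])"
  unfolding successively_conv_nth using assms by (simp add: nth_append add.commute)

abbreviation lazy_walk :: "('v \<Rightarrow> 'v \<Rightarrow> bool) \<Rightarrow> 'v list \<Rightarrow> bool" where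
  "lazy_walk adj \<equiv> successively (\<lambda>a b. adj a b \<or> a = b)"

lemma distinct_lazy_walk_is_walk:
  "distinct xs \<Longrightarrow> lazy_walk adj xs \<Longrightarrow> successively adj xs"
  by (induction "\<lambda>a b. adj a b \<or> a = b" xs rule: successively.induct) auto

lemma lazy_walk_contains_path:
  assumes "xs \<noteq> []" and "lazy_walk adj xs"
  shows "\<exists>ys. ys \<noteq> [] \<and> distinct ys \<and> successively adj ys \<and> hd ys = hd xs \<and> last ys = last xs
           \<and> set ys \<subseteq> set xs \<and> length ys \<le> length xs"
  using assms
proof (induction "length xs" arbitrary: xs rule: less_induct)
  case less
  show ?case
  proof (cases "distinct xs")
    case True
    then show ?thesis using less.prems distinct_lazy_walk_is_walk by blast
  next
    case False
    then obtain ys y zs ws where xs: "xs = ys @ [y] @ zs @ [y] @ ws"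
      using not_distinct_decomp by blast
    define xs' where "xs' = ys @ [y] @ ws"
    have shorter: "length xs' < length xs" and "xs' \<noteq> []"
      and same_ends: "hd xs' = hd xs" "last xs' = last xs" and "set xs' \<subseteq> set xs"
      unfolding xs'_def xs by (auto simp: hd_append)
    moreover have "lazy_walk adj xs'"
      using less.prems(2) unfolding xs'_def xs
      by (auto simp: successively_append_iff successively_Cons)
    ultimately obtain ys where "ys \<noteq> []" "distinct ys" "successively adj ys" "hd ys = hd xs'"
      "last ys = last xs'" "set ys \<subseteq> set xs'" "length ys \<le> length xs'"
      using less.hyps by blast
    with shorter same_ends \<open>set xs' \<subseteq> set xs\<close> show ?thesis
      by (intro exI[of _ ys]) auto
  qed
qed

lemma path_closes_to_cycle:
  assumes sym: "\<And>a b. adj a b \<Longrightarrow> adj b a"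
    and ys: "ys \<noteq> []" "distinct ys" "successively adj ys" "hd ys \<noteq> last ys" "set ys \<subseteq> V"
    and x: "x \<notin> set ys" "x \<in> V" "adj x (hd ys)" "adj x (last ys)"
  shows "is_cycle V adj (x # ys)"
  unfolding is_cycle_def
proof (intro conjI allI impI)
  show "3 \<le> length (x # ys)" using ys(1,4) by (cases ys rule: remdups_adj.cases) auto
  show "distinct (x # ys)" "set (x # ys) \<subseteq> V" using ys x by auto
  fix i assume i: "i < length (x # ys)"
  show "adj ((x # ys) ! i) ((x # ys) ! ((i + 1) mod length (x # ys)))"
  proof (cases "i = length ys")
    case True
    then show ?thesis using ys(1) x(4) sym by (simp add: last_conv_nth)
  next
    case False
    have "successively adj (x # ys)"
      using ys(1,3) x(3) by (cases ys) auto
    then show ?thesis using False i successively_nth by fastforce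
  qed
qed

lemma lazy_walk_closes_to_cycle:
  assumes sym: "\<And>a b. adj a b \<Longrightarrow> adj b a"
    and xs: "xs \<noteq> []" "lazy_walk adj xs" "hd xs \<noteq> last xs" "set xs \<subseteq> V"
    and x: "x \<notin> set xs" "x \<in> V" "adj x (hd xs)" "adj x (last xs)"
  obtains cs where "is_cycle V adj cs" "length cs \<le> Suc (length xs)" "set cs \<subseteq> insert x (set xs)"
proof -
  obtain ys where "ys \<noteq> []" "distinct ys" "successively adj ys" "hd ys = hd xs" "last ys = last xs"
    "set ys \<subseteq> set xs" "length ys \<le> length xs"
    using lazy_walk_contains_path[OF xs(1,2)] by blast
  with path_closes_to_cycle[where adj = adj and ys = ys and V = V and x = x] sym xs x
  show thesis by (intro that[of "x # ys"]) auto
qed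

lemma girth_lazy_walk_returns:
  assumes "girth_at_least V adj m" and sym: "\<And>a b. adj a b \<Longrightarrow> adj b a"
    and xs: "xs \<noteq> []" "lazy_walk adj xs" "set xs \<subseteq> V" "Suc (length xs) < m"
    and x: "x \<notin> set xs" "x \<in> V" "adj x (hd xs)" "adj x (last xs)"
  shows "hd xs = last xs"
proof (rule ccontr)
  assume "hd xs \<noteq> last xs"
  then obtain cs where "is_cycle V adj cs" "length cs \<le> Suc (length xs)"
    using lazy_walk_closes_to_cycle[OF sym xs(1,2) _ xs(3) x] by blast
  then show False using assms(1) xs(4) unfolding girth_at_least_def by fastforce
qed

lemma is_cycle_adj_Suc:
  "is_cycle V adj cs \<Longrightarrow> Suc i < length cs \<Longrightarrow> adj (cs ! i) (cs ! Suc i)"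
  unfolding is_cycle_def by (metis Suc_eq_plus1 Suc_lessD mod_less)

lemma is_cycle_adj_last:
  "is_cycle V adj cs \<Longrightarrow> adj (cs ! (length cs - 1)) (cs ! 0)"
  unfolding is_cycle_def by (metis Suc_diff_1 Suc_eq_plus1 diff_less less_le_trans mod_self
      zero_less_numeral zero_less_one)

lemma is_cycle_rotate:
  assumes "is_cycle V adj cs"
  shows "is_cycle V adj (rotate m cs)"
  unfolding is_cycle_def
proof (intro conjI allI impI)
  show "3 \<le> length (rotate m cs)" "distinct (rotate m cs)" "set (rotate m cs) \<subseteq> V"
    using assms unfolding is_cycle_def by auto
  fix i assume i: "i < length (rotate m cs)"
  let ?n = "length cs"
  have "cs \<noteq> []" using i by (cases cs) auto
  then have "adj (cs ! ((m + i) mod ?n)) (cs ! (((m + i) mod ?n + 1) mod ?n))"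
    using assms unfolding is_cycle_def by auto
  moreover have "((m + i) mod ?n + 1) mod ?n = (m + (i + 1) mod ?n) mod ?n"
    by (metis add.assoc mod_add_left_eq mod_add_right_eq)
  ultimately show "adj (rotate m cs ! i) (rotate m cs ! ((i + 1) mod length (rotate m cs)))"
    using i \<open>cs \<noteq> []\<close> by (simp add: nth_rotate)
qed

lemma is_cycle_rotate_to:
  assumes "is_cycle V adj cs" and "x \<in> set cs"
  obtains cs' where "is_cycle V adj cs'" "length cs' = length cs" "set cs' = set cs" "cs' ! 0 = x"
proof -
  obtain p where p: "p < length cs" "cs ! p = x" using assms(2) by (auto simp: in_set_conv_nth)
  then have "rotate p cs ! 0 = x" by (cases cs) (auto simp: nth_rotate)
  then show thesis
    by (intro that[of "rotate p cs"] is_cycle_rotate[OF assms(1)]) (auto simp: nth_rotate)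
qed

lemma is_cycle_neighbours_distinct:
  "is_cycle V adj cs \<Longrightarrow> cs ! 1 \<noteq> cs ! (length cs - 1)"
  unfolding is_cycle_def by (subst nth_eq_iff_index_eq) auto

section \<open>The graph G \<otimes>_H k\<close>

lemma bip_verts_iff [simp]:
  "Inl u \<in> bip_verts A B \<longleftrightarrow> u \<in> A"
  "Inr v \<in> bip_verts A B \<longleftrightarrow> v \<in> B"
  unfolding bip_verts_def by auto

lemma bip_adj_sym: "bip_adj E x y \<Longrightarrow> bip_adj E y x"
  unfolding bip_adj_def by blast

lemma bip_adj_simps [simp]:
  "bip_adj E (Inl u) (Inr v) \<longleftrightarrow> (u, v) \<in> E"
  "bip_adj E (Inr v) (Inl u) \<longleftrightarrow> (u, v) \<in> E"
  "\<not> bip_adj E (Inl u) (Inl u')"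
  "\<not> bip_adj E (Inr v) (Inr v')"
  unfolding bip_adj_def by auto

abbreviation tensorH_verts ::
    "'a set \<Rightarrow> 'b set \<Rightarrow> nat \<Rightarrow> ('a \<times> nat) set \<Rightarrow> (('a \<times> nat) + (('b \<times> nat) + 'a)) set" where
  "tensorH_verts A B k EH \<equiv> bip_verts (tensorH_A A k EH) (tensor_B A B k)"

abbreviation tensorH_adj :: "'a set \<Rightarrow> 'b set \<Rightarrow> ('a \<times> 'b) set \<Rightarrow> nat \<Rightarrow> ('a \<times> nat) set
    \<Rightarrow> ('a \<times> nat) + (('b \<times> nat) + 'a) \<Rightarrow> ('a \<times> nat) + (('b \<times> nat) + 'a) \<Rightarrow> bool" where
  "tensorH_adj A B E k EH \<equiv> bip_adj (tensorH_E A B E k EH)"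

fun tensor_proj :: "('a \<times> nat) + (('b \<times> nat) + 'a) \<Rightarrow> 'a + 'b" where
  "tensor_proj (Inl (u, i)) = Inl u"
| "tensor_proj (Inr (Inl (v, j))) = Inr v"
| "tensor_proj (Inr (Inr u)) = Inl u"

lemma tensorH_A_iff [simp]: "(u, i) \<in> tensorH_A A k EH \<longleftrightarrow> (u, i) \<in> EH \<and> u \<in> A \<and> i \<in> {1..k}"
  unfolding tensorH_A_def tensor_A_def by auto

lemma tensor_B_iff [simp]:
  "Inl (v, j) \<in> tensor_B A B k \<longleftrightarrow> v \<in> B \<and> j \<in> {1..k}"
  "Inr u \<in> tensor_B A B k \<longleftrightarrow> u \<in> A"
  unfolding tensor_B_def by auto

lemma tensorH_E_iff [simp]:
  "((u, i), Inl (v, j)) \<in> tensorH_E A B E k EH \<longleftrightarrow>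
     j = i \<and> (u, v) \<in> E \<and> (u, i) \<in> EH \<and> u \<in> A \<and> v \<in> B \<and> i \<in> {1..k}"
  "((u, i), Inr w) \<in> tensorH_E A B E k EH \<longleftrightarrow> w = u \<and> (u, i) \<in> EH \<and> u \<in> A \<and> i \<in> {1..k}"
  unfolding tensorH_E_def tensor_E_def tensorH_A_def tensor_A_def by auto

lemma tensorH_adj_B_vertex:
  "tensorH_adj A B E k EH (Inr (Inl (v, j))) y \<longleftrightarrow>
     (\<exists>u. y = Inl (u, j) \<and> (u, v) \<in> E \<and> (u, j) \<in> EH \<and> u \<in> A \<and> v \<in> B \<and> j \<in> {1..k})"
proof (cases y)
  case (Inl a)
  then show ?thesis by (cases a) auto
qed simp

lemma tensorH_adj_A_vertex:
  "tensorH_adj A B E k EH (Inl (u, i)) y \<Longrightarrow> y = Inr (Inr u) \<or> (\<exists>w. y = Inr (Inl (w, i)))"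
  by (cases y rule: tensor_proj.cases) auto

lemma tensor_proj_eq_Inr: "tensor_proj x = Inr v \<longleftrightarrow> (\<exists>j. x = Inr (Inl (v, j)))"
  by (cases x rule: tensor_proj.cases) auto

lemma tensor_proj_verts:
  "x \<in> tensorH_verts A B k EH \<Longrightarrow> tensor_proj x \<in> bip_verts A B"
  by (cases x rule: tensor_proj.cases) auto

lemma tensor_proj_adj:
  assumes "tensorH_adj A B E k EH x y"
  shows "bip_adj E (tensor_proj x) (tensor_proj y) \<or> tensor_proj x = tensor_proj y"
  using assms
  by (cases x rule: tensor_proj.cases; cases y rule: tensor_proj.cases) auto

lemma tensorH_cycle_meets_B:
  assumes cyc: "is_cycle (tensorH_verts A B k EH) (tensorH_adj A B E k EH) cs"
  obtains v j where "Inr (Inl (v, j)) \<in> set cs"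
proof -
  have "3 \<le> length cs" using cyc unfolding is_cycle_def by simp
  then have "cs ! 0 \<in> set cs" "cs ! 1 \<in> set cs" by (auto intro!: nth_mem)
  moreover have "(\<exists>a. cs ! 0 = Inl a) \<or> (\<exists>a. cs ! 1 = Inl a)"
    using is_cycle_adj_Suc[OF cyc, of 0] \<open>3 \<le> length cs\<close> unfolding bip_adj_def by auto
  ultimately obtain u i where "Inl (u, i) \<in> set cs" by force
  then obtain cs' where cs': "is_cycle (tensorH_verts A B k EH) (tensorH_adj A B E k EH) cs'"
    "set cs' = set cs" "cs' ! 0 = Inl (u, i)" "length cs' = length cs"
    using is_cycle_rotate_to[OF cyc] by metis
  let ?y = "cs' ! 1" and ?z = "cs' ! (length cs' - 1)"
  have "tensorH_adj A B E k EH (Inl (u, i)) ?y" "tensorH_adj A B E k EH (Inl (u, i)) ?z"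
    using is_cycle_adj_Suc[OF cs'(1), of 0] bip_adj_sym[OF is_cycle_adj_last[OF cs'(1)]]
      cs'(3,4) \<open>3 \<le> length cs\<close> by simp_all
  then have "?y = Inr (Inr u) \<or> (\<exists>w. ?y = Inr (Inl (w, i)))"
    and "?z = Inr (Inr u) \<or> (\<exists>w. ?z = Inr (Inl (w, i)))"
    by (blast dest: tensorH_adj_A_vertex)+
  moreover have "?y \<noteq> ?z" by (rule is_cycle_neighbours_distinct[OF cs'(1)])
  moreover have "?y \<in> set cs" "?z \<in> set cs"
    using cs'(2,4) \<open>3 \<le> length cs\<close> nth_mem[of 1 cs'] nth_mem[of "length cs' - 1" cs'] by auto
  ultimately show thesis using that by auto
qed

section \<open>Short cycles through a copy of a vertex of B\<close>

locale tensorH_cycle_through_B =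
  fixes A :: "'a set" and B :: "'b set" and E :: "('a \<times> 'b) set" and k :: nat
    and EH :: "('a \<times> nat) set"
    and cs :: "(('a \<times> nat) + (('b \<times> nat) + 'a)) list" and v :: 'b and l0 :: nat
  assumes cycle: "is_cycle (tensorH_verts A B k EH) (tensorH_adj A B E k EH) cs"
    and cs_0: "cs ! 0 = Inr (Inl (v, l0))"
    and girth_G: "girth_at_least (bip_verts A B) (bip_adj E) (Suc (length cs))"
begin

lemma length_ge_3: "3 \<le> length cs"
  using cycle unfolding is_cycle_def by simp

lemma length_pos: "0 < length cs"
  using length_ge_3 by linarith

lemma nth_in_verts: "i < length cs \<Longrightarrow> cs ! i \<in> tensorH_verts A B k EH"
  using cycle unfolding is_cycle_def by (auto intro: nth_mem)

lemma v_in_B: "v \<in> B" and l0_in_range: "l0 \<in> {1..k}"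
  using nth_in_verts[OF length_pos] cs_0 by simp_all

lemma after_visit:
  assumes "cs ! i = Inr (Inl (v, j))" and "Suc i < length cs"
  shows "\<exists>u. cs ! Suc i = Inl (u, j) \<and> (u, v) \<in> E \<and> (u, j) \<in> EH \<and> u \<in> A"
  using is_cycle_adj_Suc[OF cycle assms(2)] assms(1) by (simp add: tensorH_adj_B_vertex) blast

lemma before_visit:
  assumes "i < length cs" and "cs ! (Suc i mod length cs) = Inr (Inl (v, j))"
  shows "\<exists>u. cs ! i = Inl (u, j) \<and> (u, v) \<in> E \<and> (u, j) \<in> EH \<and> u \<in> A"
proof -
  have "tensorH_adj A B E k EH (cs ! i) (cs ! (Suc i mod length cs))"
    using cycle assms(1) unfolding is_cycle_def by simp
  then have "tensorH_adj A B E k EH (cs ! (Suc i mod length cs)) (cs ! i)"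
    by (rule bip_adj_sym)
  with assms(2) show ?thesis by (simp add: tensorH_adj_B_vertex) blast
qed

definition visits :: "nat \<Rightarrow> bool" where
  "visits i \<longleftrightarrow> (\<exists>j. cs ! i = Inr (Inl (v, j)))"

definition last_visit :: "nat \<Rightarrow> nat" where
  "last_visit i = (GREATEST j. j \<le> i \<and> visits j)"

lemma last_visit_le: "last_visit i \<le> i" and visits_last_visit: "visits (last_visit i)"
proof -
  have "visits 0" using cs_0 visits_def by blast
  have "last_visit i \<le> i \<and> visits (last_visit i)"
    unfolding last_visit_def
    by (rule GreatestI_nat[where k = 0 and b = i]) (simp_all add: \<open>visits 0\<close>)
  then show "last_visit i \<le> i" "visits (last_visit i)" by simp_all
qed

lemma visit_le_last_visit: "visits j \<Longrightarrow> j \<le> i \<Longrightarrow> j \<le> last_visit i"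
  unfolding last_visit_def by (rule Greatest_le_nat[where b = i]) auto

lemma no_visit_after_last_visit: "last_visit i < j \<Longrightarrow> j \<le> i \<Longrightarrow> \<not> visits j"
  using visit_le_last_visit by (meson leD)

lemma last_visit_visit: "visits i \<Longrightarrow> last_visit i = i"
  using visit_le_last_visit[of i i] last_visit_le[of i] by simp

lemma last_visit_Suc: "\<not> visits (Suc i) \<Longrightarrow> last_visit (Suc i) = last_visit i"
proof -
  assume "\<not> visits (Suc i)"
  then have "(\<lambda>j. j \<le> Suc i \<and> visits j) = (\<lambda>j. j \<le> i \<and> visits j)"
    by (auto simp: le_Suc_eq)
  then show ?thesis unfolding last_visit_def by simp
qed

lemma last_visit_less: "\<not> visits i \<Longrightarrow> last_visit i < i"
  using last_visit_le[of i] visits_last_visit[of i] by (cases "last_visit i = i") auto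

lemma proj_lazy_walk:
  assumes "b \<le> length cs"
  shows "lazy_walk (bip_adj E) (map (\<lambda>j. tensor_proj (cs ! j)) [a..<b])"
proof (rule successively_map_upt)
  fix j assume "Suc j < b"
  then have "tensorH_adj A B E k EH (cs ! j) (cs ! Suc j)"
    using is_cycle_adj_Suc[OF cycle] assms by simp
  then show "bip_adj E (tensor_proj (cs ! j)) (tensor_proj (cs ! Suc j))
      \<or> tensor_proj (cs ! j) = tensor_proj (cs ! Suc j)"
    by (rule tensor_proj_adj)
qed

lemma proj_segment_ends_eq:
  assumes i: "i < length cs" "\<not> visits i" "visits (Suc i mod length cs)"
  shows "tensor_proj (cs ! i) = tensor_proj (cs ! Suc (last_visit i))"
proof -
  let ?q = "last_visit i"
  define xs where "xs = map (\<lambda>j. tensor_proj (cs ! j)) [Suc ?q..<Suc i]"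
  have q: "?q < i" using last_visit_less[OF i(2)] .
  then have "xs \<noteq> []" and len: "Suc (length xs) < Suc (length cs)"
    and ends: "hd xs = tensor_proj (cs ! Suc ?q)" "last xs = tensor_proj (cs ! i)"
    using i(1) by (simp_all add: xs_def hd_map last_map del: upt_Suc)
  have walk: "lazy_walk (bip_adj E) xs"
    unfolding xs_def using i(1) by (intro proj_lazy_walk) simp
  have in_G: "set xs \<subseteq> bip_verts A B"
    using i(1) by (auto simp: xs_def intro!: tensor_proj_verts nth_in_verts)
  have "Inr v \<noteq> tensor_proj (cs ! j)" if "j \<in> {Suc ?q..<Suc i}" for j
    using no_visit_after_last_visit[of i j] that by (metis atLeastLessThan_iff less_Suc_eq_le
        Suc_le_eq tensor_proj_eq_Inr visits_def)
  then have avoid: "Inr v \<notin> set xs"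
    unfolding xs_def set_map set_upt by blast
  obtain j where "cs ! ?q = Inr (Inl (v, j))" using visits_last_visit visits_def by blast
  moreover have "Suc ?q < length cs" using q i(1) by simp
  ultimately obtain u where "cs ! Suc ?q = Inl (u, j)" "(u, v) \<in> E"
    using after_visit by blast
  then have first: "bip_adj E (Inr v) (hd xs)" using ends by simp
  obtain j' where "cs ! (Suc i mod length cs) = Inr (Inl (v, j'))" using i(3) visits_def by blast
  then obtain u' where "cs ! i = Inl (u', j')" "(u', v) \<in> E"
    using before_visit i(1) by blast
  then have last: "bip_adj E (Inr v) (last xs)" using ends by simp
  have "Inr v \<in> bip_verts A B" using v_in_B by simp
  then have "hd xs = last xs"
    using girth_lazy_walk_returns[OF girth_G bip_adj_sym \<open>xs \<noteq> []\<close> walk in_G len avoid]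
      first last by blast
  then show ?thesis using ends by simp
qed

(* A visit (v,j) of cs becomes the label j; every other position becomes the neighbour u of v
  in which the current segment starts (and, by proj_segment_ends_eq, ends). *)
definition H_walk :: "nat \<Rightarrow> 'a + nat" where
  "H_walk i = (if visits i then Inr (snd (projl (projr (cs ! i))))
              else Inl (fst (projl (cs ! Suc (last_visit i)))))"

lemma H_walk_visit: "cs ! i = Inr (Inl (v, j)) \<Longrightarrow> H_walk i = Inr j"
  by (simp add: H_walk_def visits_def)

lemma H_walk_non_visit:
  assumes "i < length cs" "\<not> visits i"
  obtains u where "H_walk i = Inl u" "tensor_proj (cs ! Suc (last_visit i)) = Inl u"
    "(u, v) \<in> E" "u \<in> A"
proof -
  obtain j where "cs ! last_visit i = Inr (Inl (v, j))" using visits_last_visit visits_def by blast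
  then obtain u where "cs ! Suc (last_visit i) = Inl (u, j)" "(u, v) \<in> E" "u \<in> A"
    using after_visit last_visit_less[OF assms(2)] assms(1) by force
  then show thesis using that assms(2) by (simp add: H_walk_def)
qed

lemma H_walk_step:
  assumes "Suc i < length cs"
  shows "bip_adj EH (H_walk i) (H_walk (Suc i)) \<or> H_walk i = H_walk (Suc i)"
proof -
  consider (enter) "visits (Suc i)" | (leave) "visits i" | (inside) "\<not> visits i" "\<not> visits (Suc i)"
    by blast
  then show ?thesis
  proof cases
    case enter
    then obtain j where j: "cs ! Suc i = Inr (Inl (v, j))" using visits_def by blast
    then obtain u where u: "cs ! i = Inl (u, j)" "(u, j) \<in> EH"
      using before_visit[of i] assms by auto
    then have "\<not> visits i" by (simp add: visits_def)
    then obtain w where "H_walk i = Inl w" "tensor_proj (cs ! Suc (last_visit i)) = Inl w"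
      using H_walk_non_visit assms by (metis Suc_lessD)
    moreover have "tensor_proj (cs ! i) = tensor_proj (cs ! Suc (last_visit i))"
      using proj_segment_ends_eq \<open>\<not> visits i\<close> enter assms by simp
    ultimately show ?thesis using u H_walk_visit[OF j] by simp
  next
    case leave
    then obtain j where j: "cs ! i = Inr (Inl (v, j))" using visits_def by blast
    then obtain u where u: "cs ! Suc i = Inl (u, j)" "(u, j) \<in> EH"
      using after_visit assms by blast
    then have "\<not> visits (Suc i)" by (simp add: visits_def)
    then have "H_walk (Suc i) = Inl u"
      using u leave by (simp add: H_walk_def last_visit_Suc last_visit_visit)
    then show ?thesis using u H_walk_visit[OF j] by simp
  next
    case inside
    then show ?thesis by (simp add: H_walk_def last_visit_Suc)
  qed
qed

lemma H_walk_first: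
  obtains b where "H_walk 1 = Inl b" "cs ! 1 = Inl (b, l0)"
proof -
  obtain b where b: "cs ! 1 = Inl (b, l0)"
    using after_visit[OF cs_0] length_ge_3 by auto
  then have "\<not> visits 1" by (simp add: visits_def)
  moreover have "visits 0" using cs_0 visits_def by blast
  ultimately have "last_visit 1 = 0" using last_visit_Suc[of 0] last_visit_visit by simp
  then show thesis using that b \<open>\<not> visits 1\<close> by (simp add: H_walk_def)
qed

lemma H_walk_last:
  obtains b where "H_walk (length cs - 1) = Inl b" "cs ! (length cs - 1) = Inl (b, l0)"
proof -
  let ?i = "length cs - 1"
  have i: "?i < length cs" "Suc ?i mod length cs = 0" using length_pos by simp_all
  then obtain b where b: "cs ! ?i = Inl (b, l0)"
    using before_visit[of ?i] cs_0 by auto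
  then have "\<not> visits ?i" by (simp add: visits_def)
  moreover have "visits (Suc ?i mod length cs)" using i(2) cs_0 visits_def by simp
  ultimately have "tensor_proj (cs ! ?i) = tensor_proj (cs ! Suc (last_visit ?i))"
    using proj_segment_ends_eq i(1) by blast
  moreover obtain u where "H_walk ?i = Inl u" "tensor_proj (cs ! Suc (last_visit ?i)) = Inl u"
    using H_walk_non_visit[OF i(1) \<open>\<not> visits ?i\<close>] by blast
  ultimately show thesis using that b by simp
qed

lemma H_walk_in_H:
  assumes "i < length cs"
  shows "H_walk i \<in> bip_verts A {1..k}"
proof (cases "visits i")
  case True
  then obtain j where j: "cs ! i = Inr (Inl (v, j))" using visits_def by blast
  then show ?thesis using nth_in_verts[OF assms] H_walk_visit[OF j] by simp
next
  case False
  then show ?thesis using H_walk_non_visit[OF assms] by (metis bip_verts_iff(1))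
qed

lemma H_walk_Inl_adj_v:
  assumes "i < length cs" and "H_walk i = Inl u"
  shows "(u, v) \<in> E"
proof -
  have "\<not> visits i" using assms(2) by (auto simp: H_walk_def)
  then show ?thesis using H_walk_non_visit[OF assms(1)] assms(2) by (metis sum.inject(1))
qed

lemma H_walk_avoids_l0: "0 < i \<Longrightarrow> i < length cs \<Longrightarrow> H_walk i \<noteq> Inr l0"
proof
  assume i: "0 < i" "i < length cs" and "H_walk i = Inr l0"
  then have "visits i" by (auto simp: H_walk_def split: if_splits)
  then obtain j where j: "cs ! i = Inr (Inl (v, j))" using visits_def by blast
  with \<open>H_walk i = Inr l0\<close> have "cs ! i = cs ! 0" using H_walk_visit cs_0 by simp
  with i length_pos show False
    using cycle unfolding is_cycle_def by (simp add: nth_eq_iff_index_eq)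
qed

lemma short_H_cycle_in_neighbourhood:
  obtains cH where "is_cycle (bip_verts A {1..k}) (bip_adj EH) cH" "length cH \<le> length cs"
    "\<forall>u. Inl u \<in> set cH \<longrightarrow> (u, v) \<in> E"
proof -
  define ys where "ys = map H_walk [1..<length cs]"
  obtain b1 where b1: "H_walk 1 = Inl b1" "cs ! 1 = Inl (b1, l0)" using H_walk_first .
  obtain b2 where b2: "H_walk (length cs - 1) = Inl b2" "cs ! (length cs - 1) = Inl (b2, l0)"
    using H_walk_last .
  have "cs \<noteq> []" "Suc 0 < length cs" using length_ge_3 by auto
  then have "ys \<noteq> []" "hd ys = Inl b1" "last ys = Inl b2" "length ys = length cs - 1"
    using b1 b2 by (simp_all add: ys_def hd_map last_map)
  have "b1 \<noteq> b2" using is_cycle_neighbours_distinct[OF cycle] b1 b2 by auto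
  have walk: "lazy_walk (bip_adj EH) ys"
    unfolding ys_def by (rule successively_map_upt) (simp add: H_walk_step)
  have in_H: "set ys \<subseteq> bip_verts A {1..k}" using H_walk_in_H by (auto simp: ys_def)
  have avoid: "Inr l0 \<notin> set ys"
    using H_walk_avoids_l0 by (auto simp: ys_def) (metis Suc_le_eq)
  have l0_in_H: "Inr l0 \<in> bip_verts A {1..k}" using l0_in_range by simp
  have "(b1, l0) \<in> EH" "(b2, l0) \<in> EH"
    using nth_in_verts[of 1] nth_in_verts[of "length cs - 1"] b1(2) b2(2) length_ge_3 by simp_all
  then have "bip_adj EH (Inr l0) (hd ys)" "bip_adj EH (Inr l0) (last ys)"
    using \<open>hd ys = Inl b1\<close> \<open>last ys = Inl b2\<close> by simp_all
  moreover have "hd ys \<noteq> last ys" using \<open>hd ys = Inl b1\<close> \<open>last ys = Inl b2\<close> \<open>b1 \<noteq> b2\<close> by simp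
  ultimately obtain cH where cH: "is_cycle (bip_verts A {1..k}) (bip_adj EH) cH"
    "length cH \<le> Suc (length ys)" "set cH \<subseteq> insert (Inr l0) (set ys)"
    using lazy_walk_closes_to_cycle[OF bip_adj_sym \<open>ys \<noteq> []\<close> walk _ in_H avoid l0_in_H] by blast
  moreover have "(u, v) \<in> E" if "Inl u \<in> set cH" for u
  proof -
    have "Inl u \<in> set ys" using that cH(3) by auto
    then obtain i where "i < length cs" "Inl u = H_walk i" by (auto simp: ys_def)
    then show ?thesis using H_walk_Inl_adj_v by simp
  qed
  ultimately show thesis
    using that \<open>length ys = length cs - 1\<close> length_ge_3 by simp
qed

end

theorem lemma5p5:
  fixes g k :: nat
    and A :: "'a set" and B :: "'b set" and E :: "('a \<times> 'b) set"
    and EH :: "('a \<times> nat) set"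
  assumes "0 < g" and "0 < k"
    and "E \<subseteq> A \<times> B"
    and "EH \<subseteq> A \<times> {1..k}"
    and "girth_at_least (bip_verts A B) (bip_adj E) (2 * g)"
    and "\<And>cs. \<lbrakk> is_cycle (bip_verts A {1..k}) (bip_adj EH) cs; length cs < 2 * g \<rbrakk>
              \<Longrightarrow> \<not> (\<exists>v \<in> B. \<forall>u. Inl u \<in> set cs \<longrightarrow> (u, v) \<in> E)"
  shows "girth_at_least (bip_verts (tensorH_A A k EH) (tensor_B A B k))
           (bip_adj (tensorH_E A B E k EH)) (2 * g)"
  unfolding girth_at_least_def
proof (intro allI impI)
  fix C assume C: "is_cycle (tensorH_verts A B k EH) (tensorH_adj A B E k EH) C"
  show "2 * g \<le> length C"
  proof (rule ccontr)
    assume short: "\<not> 2 * g \<le> length C"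
    obtain v l where "Inr (Inl (v, l)) \<in> set C" using tensorH_cycle_meets_B[OF C] .
    then obtain cs where cs: "is_cycle (tensorH_verts A B k EH) (tensorH_adj A B E k EH) cs"
      "length cs = length C" "cs ! 0 = Inr (Inl (v, l))"
      using is_cycle_rotate_to[OF C] by metis
    have "girth_at_least (bip_verts A B) (bip_adj E) (Suc (length cs))"
      using assms(5) short cs(2) unfolding girth_at_least_def by fastforce
    then interpret tensorH_cycle_through_B A B E k EH cs v l
      using cs by unfold_locales
    obtain cH where "is_cycle (bip_verts A {1..k}) (bip_adj EH) cH" "length cH < 2 * g"
      "\<forall>u. Inl u \<in> set cH \<longrightarrow> (u, v) \<in> E"
      using short_H_cycle_in_neighbourhood short cs(2) by (metis le_less_trans not_le)
    then show False using assms(6) v_in_B by blast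
  qed
qed

end
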